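(* (AdS shift.) Consider the single-fluid shifted system with $\sigma<0$, and let $t_{\mathrm b},\xi_{\mathrm b},\xi_0,t_0$ be as in the time-interval setup and $b:=\max_{t\in[t_{\mathrm b},t_0]}\sqrt2\,|y_{\mathrm i}(t)|h(t)/l>0$. Then $$\Delta t_{\mathrm b0}\ \ge\ \frac{1}{2\sqrt{2\xi_0}}\,\frac{1}{b\,c\,l}\,\frac{\xi_0-\xi_{\mathrm b}}{\sqrt{1+|\sigma|/h(t_0)^2}}.$$
   Context: Shifted single-fluid system. Fix real constants $c>0$, $l>0$, $w\in[-1,1]$ and $\sigma\in\mathbb{R}$. Let $I\subseteq\mathbb R$ be an interval and $x,y_{\mathrm r},y_{\mathrm i},z,h$ real $C^1$ functions on $I$ with $h>0$, $z\ge0$. Define $\xi=x^2+\frac{1+w}{2}z^2$. Assume on $I$: $\dot x=[-x+4c\,y_{\mathrm r}y_{\mathrm i}+x\xi]h$, $\dot y_{\mathrm r}=[\xi y_{\mathrm r}-c\,x\,y_{\mathrm i}]h$, $\dot y_{\mathrm i}=[\xi y_{\mathrm i}+c\,x\,y_{\mathrm r}]h$, $\dot z=[-\frac{1+w}{2}+\xi]zh$, $\dot h=-\xi h^2$, with constraints $x^2+4y_{\mathrm r}^2+z^2=1-\sigma/h^2$ and $y_{\mathrm r}^2+y_{\mathrm i}^2=\frac{l^2}{2h^2}$. (Here $\sigma=L^2$ encodes a cosmological constant $\Lambda$ added to the cosine potential, of the sign of $\Lambda$.) Time-interval setup: let $t_{\mathrm b}\in I$, $\xi_{\mathrm b}:=\xi(t_{\mathrm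 b})$, and let $\xi_0$ be a real number with $\xi_0>0$ and $\xi_{\mathrm b}\le\xi_0\le\frac{1+w}{2}$. Assume the set $\{t\in I:\ t\ge t_{\mathrm b},\ \xi(t)=\xi_0\}$ is nonempty and let $t_0$ be its minimum (so $\xi(t)\le\xi_0$ for all $t\in[t_{\mathrm b},t_0]$); put $\Delta t_{\mathrm b0}=t_0-t_{\mathrm b}$. *)

theory Defs
  imports "HOL-Analysis.Analysis"
begin

definition xi_fun :: "real \<Rightarrow> (real \<Rightarrow> real) \<Rightarrow> (real \<Rightarrow> real) \<Rightarrow> real \<Rightarrow> real" where
  "xi_fun w x z t = (x t)^2 + (1 + w) / 2 * (z t)^2"

end

theory Submission
  imports Defs
begin

(* Up to the first time t0 at which \<xi> reaches \<xi>0 we have \<xi> \<le> \<xi>0 \<le> (1+w)/2, and then the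
   self-interaction part of \<xi>' is nonpositive, so \<xi>' \<le> 8 c h x y_r y_i.  Here |x| \<le> sqrt \<xi>0,
   |y_i| h \<le> b l / sqrt 2, and the first constraint together with h' = -\<xi> h^2 \<le> 0 (so that
   h \<ge> h(t0)) gives 2 |y_r| \<le> sqrt (1 + |\<sigma>|/h(t0)^2).  Hence \<xi>' is bounded by a constant M on
   [t_b, t0], and the mean value theorem gives \<xi>0 - \<xi>_b \<le> (t0 - t_b) M.
   Only |\<sigma>| enters. *)

lemma diff_le_of_deriv_le:
  fixes f f' :: "real \<Rightarrow> real"
  assumes "a \<le> b"
    and "\<And>t. t \<in> {a..b} \<Longrightarrow> (f has_real_derivative f' t) (at t within {a..b})"
    and "\<And>t. t \<in> {a..b} \<Longrightarrow> f' t \<le> K"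
  shows "f b - f a \<le> (b - a) * K"
proof -
  have "(f has_derivative (*) (f' t)) (at t within {a..b})" if "a \<le> t" "t \<le> b" for t
    using assms(2)[of t] that by (simp add: has_field_derivative_def)
  from mvt_very_simple[OF assms(1) this]
  obtain t where "t \<in> {a..b}" "f b - f a = f' t * (b - a)" by blast
  with assms(1) assms(3)[of t] show ?thesis
    by (simp add: mult_right_mono mult.commute)
qed

lemma divide_le_of_le_mult:
  fixes d T M :: real
  assumes "0 \<le> d" "d \<le> T * M" "0 \<le> T"
  shows "d / M \<le> T"
proof (cases "M > 0")
  case True
  with assms(2) show ?thesis by (simp add: pos_divide_le_eq)
next
  case False
  with assms(1,3) show ?thesis by (meson divide_nonneg_nonpos not_less order_trans)
qed

lemma Icc_subset_interval:
  fixes I :: "real set"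
  assumes "is_interval I" "a \<in> I" "b \<in> I"
  shows "{a..b} \<subseteq> I"
  using assms unfolding is_interval_1 by (meson atLeastAtMost_iff subsetI)

lemma antimono_on_of_deriv_nonpos:
  fixes f f' :: "real \<Rightarrow> real"
  assumes I: "is_interval I"
    and f: "\<And>t. t \<in> I \<Longrightarrow> (f has_real_derivative f' t) (at t within I)"
    and f'_nonpos: "\<And>t. t \<in> I \<Longrightarrow> f' t \<le> 0"
  shows "antimono_on I f"
proof (rule monotone_onI)
  fix s t assume st: "s \<in> I" "t \<in> I" "s \<le> t"
  have sub: "{s..t} \<subseteq> I" using Icc_subset_interval[OF I st(1,2)] .
  have "f t - f s \<le> (t - s) * 0"
  proof (rule diff_le_of_deriv_le[OF st(3)])
    fix u assume "u \<in> {s..t}"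
    with sub have "u \<in> I" by blast
    show "(f has_real_derivative f' u) (at u within {s..t})"
      using has_field_derivative_subset[OF f[OF \<open>u \<in> I\<close>] sub] .
    show "f' u \<le> 0" using f'_nonpos[OF \<open>u \<in> I\<close>] .
  qed
  then show "f t \<le> f s" by simp
qed

lemma first_hitting_time_mem:
  fixes f :: "real \<Rightarrow> real"
  assumes I: "is_interval I" and f: "continuous_on I f" and a: "a \<in> I"
    and hit: "{t \<in> I. a \<le> t \<and> f t = v} \<noteq> {}"
  shows "Inf {t \<in> I. a \<le> t \<and> f t = v} \<in> {t \<in> I. a \<le> t \<and> f t = v}"
    (is "Inf ?S \<in> ?S")
proof -
  obtain s where s: "s \<in> ?S" using hit by blast
  define C where "C = {t \<in> {a..s}. f t = v}"
  have sub: "{a..s} \<subseteq> I" using Icc_subset_interval[OF I a] s by auto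
  have "closed C" unfolding C_def
    using continuous_on_subset[OF f sub] by (rule continuous_closed_preimage_constant) auto
  moreover have "s \<in> C" using s unfolding C_def by auto
  moreover have "bdd_below C" unfolding C_def by (rule bdd_belowI[of _ a]) auto
  ultimately have "Inf C \<in> C" using closed_contains_Inf by blast
  then have InfC: "Inf C \<in> ?S" using sub unfolding C_def by auto
  have "Inf C \<le> t" if "t \<in> ?S" for t
  proof (cases "t \<le> s")
    case True
    with that have "t \<in> C" unfolding C_def by auto
    with \<open>bdd_below C\<close> show ?thesis by (rule cInf_lower[rotated])
  next
    case False
    with \<open>Inf C \<in> C\<close> show ?thesis unfolding C_def by auto
  qed
  with InfC have "Inf ?S = Inf C" by (intro cInf_eq_minimum)
  with InfC show ?thesis by simp
qed

lemma le_before_first_hitting_time: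
  fixes f :: "real \<Rightarrow> real"
  assumes I: "is_interval I" and f: "continuous_on I f" and a: "a \<in> I" and "f a \<le> v"
    and hit: "{t \<in> I. a \<le> t \<and> f t = v} \<noteq> {}"
    and t: "t \<in> {a..Inf {s \<in> I. a \<le> s \<and> f s = v}}"
  shows "f t \<le> v"
proof (rule ccontr)
  let ?S = "{s \<in> I. a \<le> s \<and> f s = v}"
  assume "\<not> f t \<le> v"
  have "Inf ?S \<in> I" using first_hitting_time_mem[OF I f a hit] by simp
  then have "t \<in> I" using Icc_subset_interval[OF I a] t by blast
  then have sub: "{a..t} \<subseteq> I" using Icc_subset_interval[OF I a] by simp
  obtain u where u: "a \<le> u" "u \<le> t" "f u = v"
    using IVT'[of f a v t] continuous_on_subset[OF f sub] \<open>f a \<le> v\<close> \<open>\<not> f t \<le> v\<close> t by auto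
  have "u \<in> ?S" using u sub by auto
  then have "Inf ?S \<le> u" by (intro cInf_lower) auto
  moreover have "t \<le> Inf ?S" using t by simp
  ultimately have "u = t" using u(2) by linarith
  with u(3) \<open>\<not> f t \<le> v\<close> show False by simp
qed

lemma first_hitting_time_lower_bound:
  fixes f f' :: "real \<Rightarrow> real"
  assumes I: "is_interval I"
    and f: "\<And>t. t \<in> I \<Longrightarrow> (f has_real_derivative f' t) (at t within I)"
    and a: "a \<in> I" "f a \<le> v" and hit: "{t \<in> I. a \<le> t \<and> f t = v} \<noteq> {}"
    and f'_le: "\<And>t. t \<in> {a..Inf {t \<in> I. a \<le> t \<and> f t = v}} \<Longrightarrow> f t \<le> v \<Longrightarrow> f' t \<le> M"
  shows "(v - f a) / M \<le> Inf {t \<in> I. a \<le> t \<and> f t = v} - a"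
proof -
  let ?t0 = "Inf {t \<in> I. a \<le> t \<and> f t = v}"
  note cont = DERIV_continuous_on[OF f]
  have t0: "?t0 \<in> I" "a \<le> ?t0" "f ?t0 = v"
    using first_hitting_time_mem[OF I cont a(1) hit] by auto
  have sub: "{a..?t0} \<subseteq> I" using Icc_subset_interval[OF I a(1) t0(1)] .
  have "f ?t0 - f a \<le> (?t0 - a) * M"
  proof (rule diff_le_of_deriv_le[OF t0(2)])
    fix t assume t: "t \<in> {a..?t0}"
    with sub show "(f has_real_derivative f' t) (at t within {a..?t0})"
      by (blast intro: has_field_derivative_subset[OF f])
    show "f' t \<le> M"
      using f'_le[OF t] le_before_first_hitting_time[OF I cont a hit t] by blast
  qed
  with t0(2,3) a(2) show ?thesis by (intro divide_le_of_le_mult) auto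
qed

lemma le_SUP_of_continuous_on_Icc:
  fixes f :: "real \<Rightarrow> real"
  assumes "continuous_on {a..b} f" "t \<in> {a..b}"
  shows "f t \<le> (SUP s\<in>{a..b}. f s)"
proof -
  have "bdd_above (f ` {a..b})"
    using compact_continuous_image[OF assms(1) compact_Icc]
    by (simp add: bounded_imp_bdd_above compact_imp_bounded)
  with assms(2) show ?thesis by (intro cSUP_upper)
qed

lemma xi_fun_nonneg:
  assumes "-1 \<le> w"
  shows "0 \<le> xi_fun w x z t"
  using assms by (simp add: xi_fun_def)

lemma xi_fun_has_real_derivative:
  assumes "(x has_real_derivative x') (at t within S)" "(z has_real_derivative z') (at t within S)"
  shows "(xi_fun w x z has_real_derivative 2 * x t * x' + (1 + w) / 2 * (2 * z t * z'))
           (at t within S)"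
proof -
  have "xi_fun w x z = (\<lambda>t. (x t)^2 + (1 + w) / 2 * (z t)^2)"
    by (auto simp: xi_fun_def)
  then show ?thesis
    using assms by (auto intro!: derivative_eq_intros)
qed

lemma xi_deriv_le_coupling:
  fixes w x yr yi z h c :: real
  defines "\<xi> \<equiv> x^2 + (1 + w) / 2 * z^2"
  assumes w: "-1 \<le> w" "w \<le> 1" and h: "h > 0" and \<xi>_le: "\<xi> \<le> (1 + w) / 2"
  shows "2 * x * ((- x + 4 * c * yr * yi + x * \<xi>) * h)
           + (1 + w) / 2 * (2 * z * ((- (1 + w) / 2 + \<xi>) * z * h))
         \<le> 8 * c * h * x * yr * yi"
proof -
  have "\<xi> \<ge> 0" using w unfolding \<xi>_def by simp
  have "2 * \<xi>^2 \<le> (1 + w) * \<xi>"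
    using mult_right_mono[OF \<xi>_le \<open>\<xi> \<ge> 0\<close>] by (simp add: power2_eq_square)
  also have "\<dots> = (1 + w) * x^2 + (1 + w)^2 / 2 * z^2"
    unfolding \<xi>_def by (simp add: power2_eq_square field_simps)
  also have "\<dots> \<le> 2 * x^2 + (1 + w)^2 / 2 * z^2"
    using w by (simp add: mult_right_mono)
  finally have "h * (2 * \<xi>^2 - 2 * x^2 - (1 + w)^2 / 2 * z^2) \<le> 0"
    using h by (simp add: mult_nonneg_nonpos)
  moreover have "2 * x * ((- x + 4 * c * yr * yi + x * \<xi>) * h)
           + (1 + w) / 2 * (2 * z * ((- (1 + w) / 2 + \<xi>) * z * h))
         = h * (2 * \<xi>^2 - 2 * x^2 - (1 + w)^2 / 2 * z^2) + 8 * c * h * x * yr * yi"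
    unfolding \<xi>_def by (simp add: power2_eq_square field_simps)
  ultimately show ?thesis by linarith
qed

lemma coupling_le_rate:
  fixes x yr yi z h h0 c l \<sigma> \<xi>0 b :: real
  assumes c: "c > 0" and l: "l > 0" and h0: "0 < h0" "h0 \<le> h"
    and x: "x^2 \<le> \<xi>0"
    and constr: "x^2 + 4 * yr^2 + z^2 = 1 - \<sigma> / h^2"
    and yi: "sqrt 2 * \<bar>yi\<bar> * h / l \<le> b"
  shows "8 * c * h * x * yr * yi \<le> 2 * sqrt (2 * \<xi>0) * b * c * l * sqrt (1 + \<bar>\<sigma>\<bar> / h0^2)"
proof -
  define S where "S = 1 + \<bar>\<sigma>\<bar> / h0^2"
  have ax: "\<bar>x\<bar> \<le> sqrt \<xi>0" using x by (simp add: real_le_rsqrt)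
  have "(2 * \<bar>yr\<bar>)^2 = 4 * yr^2"
    by (simp add: power_mult_distrib)
  also have "\<dots> \<le> 1 - \<sigma> / h^2"
    using constr zero_le_power2[of x] zero_le_power2[of z] by linarith
  also have "\<dots> \<le> 1 + \<bar>\<sigma>\<bar> / h^2"
    using divide_right_mono[of "- \<sigma>" "\<bar>\<sigma>\<bar>" "h^2"] by simp
  also have "\<dots> \<le> S"
    unfolding S_def using h0 by (simp add: divide_left_mono power_mono)
  finally have ayr: "\<bar>yr\<bar> \<le> sqrt S / 2" using real_le_rsqrt by fastforce
  have ayi: "\<bar>yi\<bar> * h \<le> b * l / sqrt 2"
    using yi l by (simp add: pos_divide_le_eq pos_le_divide_eq mult_ac)
  have "8 * c * h * x * yr * yi \<le> 8 * c * \<bar>x\<bar> * \<bar>yr\<bar> * (\<bar>yi\<bar> * h)"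
    using h0 c by (simp add: abs_mult[symmetric] mult_ac abs_le_iff)
  also have "\<dots> \<le> 8 * c * sqrt \<xi>0 * (sqrt S / 2) * (b * l / sqrt 2)"
    using ax ayr ayi c h0 order_trans[OF zero_le_power2 x] by (intro mult_mono) (auto simp: S_def)
  also have "\<dots> = 2 * sqrt (2 * \<xi>0) * b * c * l * sqrt S"
    by (simp add: real_sqrt_mult field_simps)
  finally show ?thesis unfolding S_def .
qed

lemma xi_deriv_le_rate:
  fixes w x yr yi z h h0 c l \<sigma> \<xi>0 b :: real
  defines "\<xi> \<equiv> x^2 + (1 + w) / 2 * z^2"
  assumes w: "-1 \<le> w" "w \<le> 1" and c: "c > 0" and l: "l > 0" and h0: "0 < h0" "h0 \<le> h"
    and \<xi>_le: "\<xi> \<le> \<xi>0" and \<xi>0_le: "\<xi>0 \<le> (1 + w) / 2"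
    and constr: "x^2 + 4 * yr^2 + z^2 = 1 - \<sigma> / h^2"
    and yi: "sqrt 2 * \<bar>yi\<bar> * h / l \<le> b"
  shows "2 * x * ((- x + 4 * c * yr * yi + x * \<xi>) * h)
           + (1 + w) / 2 * (2 * z * ((- (1 + w) / 2 + \<xi>) * z * h))
         \<le> 2 * sqrt (2 * \<xi>0) * b * c * l * sqrt (1 + \<bar>\<sigma>\<bar> / h0^2)"
proof -
  have "h > 0" using h0 by linarith
  have "\<xi> \<le> (1 + w) / 2" using \<xi>_le \<xi>0_le by linarith
  have "0 \<le> (1 + w) / 2 * z^2" using w(1) by simp
  then have "x^2 \<le> \<xi>0" using \<xi>_le unfolding \<xi>_def by linarith
  have "2 * x * ((- x + 4 * c * yr * yi + x * \<xi>) * h)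
           + (1 + w) / 2 * (2 * z * ((- (1 + w) / 2 + \<xi>) * z * h))
         \<le> 8 * c * h * x * yr * yi"
    using xi_deriv_le_coupling[OF w \<open>h > 0\<close>] \<open>\<xi> \<le> (1 + w) / 2\<close> unfolding \<xi>_def by blast
  also have "\<dots> \<le> 2 * sqrt (2 * \<xi>0) * b * c * l * sqrt (1 + \<bar>\<sigma>\<bar> / h0^2)"
    using coupling_le_rate[OF c l h0 \<open>x^2 \<le> \<xi>0\<close> constr yi] .
  finally show ?thesis .
qed

theorem mainTheorem4:
  fixes c l w \<sigma> :: real
    and I :: "real set"
    and x yr yi z h :: "real \<Rightarrow> real"
    and tb \<xi>0 :: real
  assumes c_pos: "c > 0" and l_pos: "l > 0" and w_range: "-1 \<le> w" "w \<le> 1"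
    and I_int: "is_interval I"
    and h_pos: "\<And>t. t \<in> I \<Longrightarrow> h t > 0"
    and z_nonneg: "\<And>t. t \<in> I \<Longrightarrow> z t \<ge> 0"
    and dx: "\<And>t. t \<in> I \<Longrightarrow> (x has_real_derivative
              ((- x t + 4 * c * yr t * yi t + x t * xi_fun w x z t) * h t)) (at t within I)"
    and dyr: "\<And>t. t \<in> I \<Longrightarrow> (yr has_real_derivative
              ((xi_fun w x z t * yr t - c * x t * yi t) * h t)) (at t within I)"
    and dyi: "\<And>t. t \<in> I \<Longrightarrow> (yi has_real_derivative
              ((xi_fun w x z t * yi t + c * x t * yr t) * h t)) (at t within I)"
    and dz: "\<And>t. t \<in> I \<Longrightarrow> (z has_real_derivative
              ((- (1 + w) / 2 + xi_fun w x z t) * z t * h t)) (at t within I)"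
    and dh: "\<And>t. t \<in> I \<Longrightarrow> (h has_real_derivative
              (- xi_fun w x z t * (h t)^2)) (at t within I)"
    and constr1: "\<And>t. t \<in> I \<Longrightarrow> (x t)^2 + 4 * (yr t)^2 + (z t)^2 = 1 - \<sigma> / (h t)^2"
    and constr2: "\<And>t. t \<in> I \<Longrightarrow> (yr t)^2 + (yi t)^2 = l^2 / (2 * (h t)^2)"
    and sigma_neg: "\<sigma> < 0"
    and tb_in: "tb \<in> I"
    and xi0_pos: "\<xi>0 > 0"
    and xi0_ge: "xi_fun w x z tb \<le> \<xi>0"
    and xi0_le: "\<xi>0 \<le> (1 + w) / 2"
    and nonempty: "{t \<in> I. t \<ge> tb \<and> xi_fun w x z t = \<xi>0} \<noteq> {}"
  shows "let t0 = Inf {t \<in> I. t \<ge> tb \<and> xi_fun w x z t = \<xi>0};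
             b = (SUP t\<in>{tb..t0}. sqrt 2 * \<bar>yi t\<bar> * h t / l)
         in t0 - tb \<ge> 1 / (2 * sqrt (2 * \<xi>0)) * (1 / (b * c * l))
                       * ((\<xi>0 - xi_fun w x z tb) / sqrt (1 + \<bar>\<sigma>\<bar> / (h t0)^2))"
proof -
  define X where "X = xi_fun w x z"
  define X' where "X' t = 2 * x t * ((- x t + 4 * c * yr t * yi t + x t * X t) * h t)
      + (1 + w) / 2 * (2 * z t * ((- (1 + w) / 2 + X t) * z t * h t))" for t
  define t0 where "t0 = Inf {t \<in> I. tb \<le> t \<and> X t = \<xi>0}"
  define b where "b = (SUP t\<in>{tb..t0}. sqrt 2 * \<bar>yi t\<bar> * h t / l)"
  define M where "M = 2 * sqrt (2 * \<xi>0) * b * c * l * sqrt (1 + \<bar>\<sigma>\<bar> / (h t0)^2)"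
  have dX: "(X has_real_derivative X' t) (at t within I)" if "t \<in> I" for t
    unfolding X_def X'_def by (rule xi_fun_has_real_derivative[OF dx[OF that] dz[OF that]])
  have t0: "t0 \<in> I" "tb \<le> t0"
    using first_hitting_time_mem[OF I_int DERIV_continuous_on[OF dX] tb_in] nonempty
    unfolding t0_def X_def by auto
  have sub: "{tb..t0} \<subseteq> I" using Icc_subset_interval[OF I_int tb_in t0(1)] .
  have h_ge: "h t0 \<le> h t" if "t \<in> {tb..t0}" for t
    using antimono_on_of_deriv_nonpos[OF I_int dh] xi_fun_nonneg[OF w_range(1)] that sub t0(1)
    by (auto dest: monotone_onD)
  have yi_le: "sqrt 2 * \<bar>yi t\<bar> * h t / l \<le> b" if "t \<in> {tb..t0}" for t
    unfolding b_def using that l_pos sub continuous_on_subset[OF DERIV_continuous_on[OF dh]]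
      continuous_on_subset[OF DERIV_continuous_on[OF dyi]]
    by (intro le_SUP_of_continuous_on_Icc continuous_intros) auto
  have X'_le: "X' t \<le> M" if "t \<in> {tb..t0}" "X t \<le> \<xi>0" for t
  proof -
    have "t \<in> I" using that(1) sub by blast
    from xi_deriv_le_rate[OF w_range c_pos l_pos h_pos[OF t0(1)] h_ge[OF that(1)]
        that(2)[unfolded X_def xi_fun_def] xi0_le constr1[OF \<open>t \<in> I\<close>] yi_le[OF that(1)]]
    show ?thesis unfolding X'_def M_def X_def xi_fun_def .
  qed
  have "(\<xi>0 - X tb) / M \<le> t0 - tb"
    using X'_le nonempty xi0_ge unfolding t0_def X_def
    by (intro first_hitting_time_lower_bound[OF I_int dX[unfolded X_def] tb_in]) auto
  moreover have "1 / (2 * sqrt (2 * \<xi>0)) * (1 / (b * c * l))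
      * ((\<xi>0 - X tb) / sqrt (1 + \<bar>\<sigma>\<bar> / (h t0)^2)) = (\<xi>0 - X tb) / M"
    unfolding M_def by simp
  ultimately show ?thesis
    unfolding Let_def X_def[symmetric] t0_def[symmetric] b_def[symmetric] by linarith
qed

end
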